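(* Let $n>5$ with $n\equiv 1\pmod 4$, and consider odd $r\in[3,n-4]$. Then $E(D_n^s[r,n-r-1])$ attains its maximum at $r=3$, and $$E(D_n^s[3,n-4])>E(D_n^s[5,n-6])>\dots>E\!\left(D_n^s\!\left[\tfrac{n-3}{2},\tfrac{n+1}{2}\right]\right),$$ the chain running over odd $r=3,5,7,\dots,\frac{n-3}{2}$.
   Context: A signed digraph (sidigraph) is a digraph in which every arc carries a sign $+1$ or $-1$; the energy of a sidigraph is the sum of the absolute values of the real parts of the eigenvalues of its signed adjacency matrix. For $k\ge 2$, $C_k$ denotes a directed cycle of length $k$ all of whose arc signs multiply to $+1$. It is known that for odd $k$, $E(C_k)=\csc\frac{\pi}{2k}$ (and the same holds for a negative cycle of odd length). For integers $p,q\ge2$ with $p+q\le n$, $D_n^s[p,q]$ denotes an $n$-vertex sidigraph whose only directed cycles are two vertex-disjoint positive cycles $C_p$ and $C_q$ (other vertices lie on no directed cycle); its energy is $E(C_p)+E(C_q)$. *)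

theory Defs
  imports Complex_Main
begin

text \<open>A positive directed cycle C_k (product of arc signs = +1) has signed adjacency
matrix with characteristic polynomial x^k - 1, so its eigenvalues are the k-th roots
of unity exp(2 pi i j / k), j = 0..k-1, each simple.\<close>

definition cycle_energy :: "nat \<Rightarrow> real" where
  "cycle_energy k = (\<Sum>j<k. \<bar>Re (cis (2 * pi * real j / real k))\<bar>)"

text \<open>Energy of D_n^s[p,q]: the sidigraph whose only directed cycles are two
vertex-disjoint positive cycles C_p and C_q; its energy is E(C_p) + E(C_q).
(The parameter n is the number of vertices; it does not affect the energy.)\<close>

definition D_energy :: "nat \<Rightarrow> nat \<Rightarrow> nat \<Rightarrow> real" where
  "D_energy n p q = cycle_energy p + cycle_energy q"

end

theory Submission
  imports Defs "HOL-Number_Theory.Cong"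
begin

(* For odd k the numbers |cos (2 pi j / k)|, j < k, are a permutation of |cos (pi i / k)|, i < k,
   and a telescoping cosine sum evaluates their total to csc (pi / (2k)).  The interpolating
   function x \<mapsto> csc (pi / (2x)) is strictly convex for x \<ge> pi/2: its derivative is
   (2/pi) t^2 cos t / sin^2 t with t = pi / (2x), and a Taylor estimate shows that this kernel
   decreases in t on (0, 1].  So pushing the two cycle lengths r and n - r - 1 (whose sum is fixed)
   apart strictly increases the energy; this is the chain, and the maximum at r = 3 follows by the
   symmetry r \<leftrightarrow> n - r - 1. *)

lemma bij_betw_mult_mod:
  fixes a k :: nat
  assumes "coprime a k"
  shows "bij_betw (\<lambda>j. a * j mod k) {..<k} {..<k}"
proof -
  have "inj_on (\<lambda>j. a * j mod k) {..<k}"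
  proof (rule inj_onI)
    fix i j assume "i \<in> {..<k}" "j \<in> {..<k}" "a * i mod k = a * j mod k"
    then show "i = j"
      using assms by (auto simp: cong_def [symmetric] cong_mult_lcancel_nat intro: cong_less_imp_eq_nat)
  qed
  moreover have "(\<lambda>j. a * j mod k) ` {..<k} \<subseteq> {..<k}" by auto
  ultimately show ?thesis
    by (simp add: bij_betw_def endo_inj_surj)
qed

lemma sum_cos_multiples:
  fixes \<theta> :: real
  shows "2 * sin (\<theta>/2) * (\<Sum>i<N. cos (real i * \<theta>))
    = sin ((2 * real N - 1) * \<theta>/2) + sin (\<theta>/2)"
proof (induction N)
  case 0
  then show ?case by simp
next
  case (Suc N)
  have angle: "(2 * real N - 1) * \<theta>/2 = real N * \<theta> - \<theta>/2"
    by (simp add: field_simps)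
  have "2 * sin (\<theta>/2) * (\<Sum>i<Suc N. cos (real i * \<theta>))
      = 2 * sin (\<theta>/2) * (\<Sum>i<N. cos (real i * \<theta>)) + 2 * sin (\<theta>/2) * cos (real N * \<theta>)"
    by (simp add: distrib_left)
  also have "\<dots>
      = sin (real N * \<theta> - \<theta>/2) + sin (\<theta>/2) + 2 * sin (\<theta>/2) * cos (real N * \<theta>)"
    by (simp only: Suc.IH angle)
  also have "\<dots> = sin (real N * \<theta> + \<theta>/2) + sin (\<theta>/2)"
    by (simp add: sin_add sin_diff algebra_simps)
  also have "real N * \<theta> + \<theta>/2 = (2 * real (Suc N) - 1) * \<theta>/2"
    by (simp add: field_simps)
  finally show ?case .
qed

lemma cycle_energy_eq_sum_abs_cos:
  assumes "odd k"
  shows "cycle_energy k = (\<Sum>i<k. \<bar>cos (real i * pi / real k)\<bar>)"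
proof -
  have k: "real k > 0"
    using assms by (auto intro: odd_pos)
  have "\<bar>Re (cis (2 * pi * real j / real k))\<bar> = \<bar>cos (real (2 * j mod k) * pi / real k)\<bar>" for j
  proof -
    have "real (2 * j) = real k * real (2 * j div k) + real (2 * j mod k)"
      unfolding of_nat_mult [symmetric] of_nat_add [symmetric] by simp
    then have "2 * pi * real j / real k = real (2 * j mod k) * pi / real k + real (2 * j div k) * pi"
      using k by (simp add: field_simps)
    then show ?thesis
      by (simp add: cos_add abs_mult)
  qed
  moreover have "bij_betw (\<lambda>j. 2 * j mod k) {..<k} {..<k}"
    using assms by (intro bij_betw_mult_mod) simp
  ultimately show ?thesis
    unfolding cycle_energy_def
    using sum.reindex_bij_betw [of "\<lambda>j. 2 * j mod k" "{..<k}" "{..<k}"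
        "\<lambda>i. \<bar>cos (real i * pi / real k)\<bar>"]
    by simp
qed

lemma sum_abs_cos_odd_split:
  assumes k: "k = 2 * p + 1"
  shows "(\<Sum>i<k. \<bar>cos (real i * pi / real k)\<bar>)
    = 2 * (\<Sum>i<p+1. cos (real i * pi / real k)) - (\<Sum>i<k. cos (real i * pi / real k))"
proof -
  define c where "c i = cos (real i * pi / real k)" for i :: nat
  have angle: "real i * pi / real k \<le> pi * x \<longleftrightarrow> real i \<le> x * real k" for i and x :: real
  proof -
    have "real i * pi / real k = pi * (real i / real k)"
      by simp
    then show ?thesis
      using k by (simp add: pos_divide_le_eq)
  qed
  have nonneg: "c i \<ge> 0" if "i \<le> p" for i
  proof -
    have "0 \<le> real i * pi / real k"
      by simp
    moreover have "real i * pi / real k \<le> pi/2"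
      using angle [of i "1/2"] that k by simp
    ultimately show ?thesis
      unfolding c_def using pi_gt_zero by (intro cos_ge_zero) linarith+
  qed
  have nonpos: "c i \<le> 0" if "p < i" "i < k" for i
  proof -
    have "pi/2 < real i * pi / real k"
      using angle [of i "1/2"] that k by simp
    moreover have "real i * pi / real k \<le> pi"
      using angle [of i 1] that k by simp
    ultimately have "0 \<le> cos (pi - real i * pi / real k)"
      by (intro cos_ge_zero) linarith+
    then show ?thesis
      unfolding c_def by simp
  qed
  have split: "{..<k} = {..p} \<union> {p<..<k}" "{..p} \<inter> {p<..<k} = {}"
    using k by auto
  have "(\<Sum>i<k. \<bar>c i\<bar>) = (\<Sum>i\<le>p. c i) + (\<Sum>i\<in>{p<..<k}. - c i)"
    unfolding split(1) using split(2) nonneg nonpos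
    by (subst sum.union_disjoint) (auto intro!: arg_cong2 [where f = "(+)"] sum.cong)
  also have "\<dots> = 2 * (\<Sum>i<p+1. c i) - (\<Sum>i<k. c i)"
    unfolding split(1) using split(2)
    by (subst sum.union_disjoint) (auto simp: sum_negf lessThan_Suc_atMost)
  finally show ?thesis
    unfolding c_def .
qed

lemma sum_abs_cos_odd:
  assumes "odd k"
  shows "(\<Sum>i<k. \<bar>cos (real i * pi / real k)\<bar>) = 1 / sin (pi / (2 * real k))"
proof -
  obtain p where kp: "k = 2 * p + 1"
    using assms oddE by blast
  define \<theta> where "\<theta> = pi / real k"
  define c where "c i = cos (real i * \<theta>)" for i :: nat
  have half: "2 * sin (\<theta>/2) * (\<Sum>i<p+1. c i) = 1 + sin (\<theta>/2)"
  proof -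
    have "(2 * real (p+1) - 1) * \<theta>/2 = pi/2"
      unfolding \<theta>_def kp by (simp add: field_simps)
    then show ?thesis
      using sum_cos_multiples [of \<theta> "p+1"] unfolding c_def by simp
  qed
  have full: "2 * sin (\<theta>/2) * (\<Sum>i<k. c i) = 2 * sin (\<theta>/2)"
  proof -
    have "(2 * real k - 1) * \<theta>/2 = pi - \<theta>/2"
      unfolding \<theta>_def kp by (simp add: field_simps)
    moreover have "sin (pi - \<theta>/2) = sin (\<theta>/2)"
      by simp
    ultimately show ?thesis
      using sum_cos_multiples [of \<theta> k] unfolding c_def by (simp only:)
  qed
  have "0 < \<theta>/2" "\<theta>/2 < pi"
    unfolding \<theta>_def kp by (auto simp: field_simps add_pos_nonneg)
  then have sin_pos: "sin (\<theta>/2) > 0"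
    by (intro sin_gt_zero)
  have abs_sum:
    "(\<Sum>i<k. \<bar>cos (real i * pi / real k)\<bar>) = 2 * (\<Sum>i<p+1. c i) - (\<Sum>i<k. c i)"
    unfolding c_def \<theta>_def using sum_abs_cos_odd_split [OF kp] by simp
  have "2 * sin (\<theta>/2) * (\<Sum>i<k. \<bar>cos (real i * pi / real k)\<bar>)
      = 2 * (2 * sin (\<theta>/2) * (\<Sum>i<p+1. c i)) - 2 * sin (\<theta>/2) * (\<Sum>i<k. c i)"
    unfolding abs_sum by (simp add: algebra_simps)
  also have "\<dots> = 2"
    unfolding half full by simp
  finally have "(\<Sum>i<k. \<bar>cos (real i * pi / real k)\<bar>) = 1 / sin (\<theta>/2)"
    using sin_pos by (simp add: field_simps)
  then show ?thesis
    unfolding \<theta>_def by (simp add: field_simps)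
qed

lemma sin_le_taylor_7:
  fixes u :: real
  assumes "0 \<le> u"
  shows "sin u \<le> u - u^3/6 + u^5/120 + u^7/5040"
proof -
  have "\<bar>sin u - (\<Sum>m<7. sin_coeff m * u ^ m)\<bar> \<le> inverse (fact 7) * \<bar>u\<bar> ^ 7"
    by (rule Maclaurin_sin_bound)
  moreover have "(\<Sum>m<7. sin_coeff m * u ^ m) = u - u^3/6 + u^5/120"
    by (simp add: lessThan_nat_numeral sin_coeff_def fact_numeral field_simps)
  moreover have "inverse (fact 7) * \<bar>u\<bar> ^ 7 = u^7/5040"
    using assms by (simp add: fact_numeral eval_nat_numeral field_simps)
  ultimately show ?thesis by linarith
qed

lemma one_minus_half_square_le_cos:
  fixes u :: real
  shows "1 - u^2/2 \<le> cos u"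
proof -
  have "sin (u/2)^2 \<le> (u/2)^2"
    using abs_sin_x_le_abs_x [of "u/2"] by (metis abs_ge_zero power_mono power2_abs)
  then show ?thesis
    using cos_double_sin [of "u/2"] by (simp add: power2_eq_square)
qed

lemma four_sin_less:
  fixes u :: real
  assumes "0 < u" "u \<le> 2"
  shows "4 * sin u < u * (3 + cos u)"
proof -
  have "u^2 \<le> 4"
    using assms power_mono [of u 2 2] by simp
  moreover have "u^4 \<le> 16"
    using assms power_mono [of u 2 4] by simp
  ultimately have "0 < u^3 * (1/6 - u^2/30 - u^4/1260)"
    using assms by simp
  also have "u^3 * (1/6 - u^2/30 - u^4/1260) = u * (4 - u^2/2) - 4 * (u - u^3/6 + u^5/120 + u^7/5040)"
    by (simp add: algebra_simps eval_nat_numeral)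
  also have "\<dots> \<le> u * (3 + cos u) - 4 * sin u"
    using sin_le_taylor_7 [of u] one_minus_half_square_le_cos [of u] assms
    by (smt (verit) mult_left_mono)
  finally show ?thesis by simp
qed

definition tsq_cot_csc :: "real \<Rightarrow> real" where
  "tsq_cot_csc t = t^2 * cos t / (sin t)^2"

lemma tsq_cot_csc_deriv_neg:
  assumes "0 < t" "t \<le> 1"
  shows "\<exists>y. (tsq_cot_csc has_real_derivative y) (at t) \<and> y < 0"
proof -
  have sin_pos: "sin t > 0"
    using assms pi_ge_two by (intro sin_gt_zero) auto
  let ?y = "((2*t*cos t - t^2*sin t) * (sin t)^2 - t^2*cos t * (2*sin t*cos t)) / ((sin t)^2)^2"
  have "(tsq_cot_csc has_real_derivative ?y) (at t)"
    unfolding tsq_cot_csc_def [abs_def] using sin_pos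
    by (auto intro!: derivative_eq_intros simp: power2_eq_square)
  moreover have "(2*t*cos t - t^2*sin t) * (sin t)^2 - t^2*cos t * (2*sin t*cos t)
      = t * sin t * ((4 * sin (2*t) - (2*t) * (3 + cos (2*t))) / 4)"
  proof -
    have "(2*t*c - t^2*s) * s^2 - t^2*c * (2*s*c)
        = t*s * ((4 * (2*s*c) - (2*t) * (3 + (c^2 - s^2))) / 4) + 3/2 * t^2 * s * (1 - s^2 - c^2)"
      for s c :: real
      by (simp add: field_simps power2_eq_square)
    then show ?thesis
      by (simp add: sin_double cos_double cos_squared_eq)
  qed
  moreover have "4 * sin (2*t) < (2*t) * (3 + cos (2*t))"
    using assms by (intro four_sin_less) auto
  with sin_pos assms have "t * sin t * ((4 * sin (2*t) - (2*t) * (3 + cos (2*t))) / 4) / ((sin t)^2)^2 < 0"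
    by (intro divide_neg_pos mult_pos_neg) auto
  ultimately show ?thesis
    by auto
qed

lemma tsq_cot_csc_strict_decreasing:
  assumes "0 < s" "s < t" "t \<le> 1"
  shows "tsq_cot_csc t < tsq_cot_csc s"
  using assms by (intro DERIV_neg_imp_decreasing [OF \<open>s < t\<close>] tsq_cot_csc_deriv_neg) auto

definition csc_energy :: "real \<Rightarrow> real" where
  "csc_energy x = 1 / sin (pi / (2 * x))"

lemma cycle_energy_odd:
  "odd k \<Longrightarrow> cycle_energy k = csc_energy (real k)"
  unfolding csc_energy_def by (simp add: cycle_energy_eq_sum_abs_cos sum_abs_cos_odd)

lemma csc_energy_deriv:
  assumes "1/2 < x"
  shows "(csc_energy has_real_derivative (2/pi) * tsq_cot_csc (pi / (2*x))) (at x)"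
proof -
  have "0 < pi / (2*x)" "pi / (2*x) < pi"
    using assms by (auto simp: field_simps)
  then have sin_pos: "sin (pi / (2*x)) > 0"
    by (intro sin_gt_zero)
  have "(csc_energy has_real_derivative
          - (cos (pi / (2*x)) * (- (pi * 2) / (2*x)^2)) / (sin (pi / (2*x)))^2) (at x)"
    unfolding csc_energy_def [abs_def] using sin_pos assms
    by (auto intro!: derivative_eq_intros simp: power2_eq_square)
  moreover have "- (cos (pi / (2*x)) * (- (pi * 2) / (2*x)^2)) / (sin (pi / (2*x)))^2
      = (2/pi) * tsq_cot_csc (pi / (2*x))"
    unfolding tsq_cot_csc_def using assms by (simp add: field_simps power2_eq_square)
  ultimately show ?thesis by simp
qed

lemma csc_energy_deriv_strict_mono:
  assumes "pi/2 \<le> x" "x < y"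
  shows "(2/pi) * tsq_cot_csc (pi / (2*x)) < (2/pi) * tsq_cot_csc (pi / (2*y))"
proof -
  have "x > 0"
    using assms pi_gt_zero by linarith
  then have "tsq_cot_csc (pi / (2*x)) < tsq_cot_csc (pi / (2*y))"
    using assms by (intro tsq_cot_csc_strict_decreasing) (auto simp: field_simps)
  then show ?thesis
    by (simp add: divide_strict_right_mono)
qed

lemma csc_energy_spread:
  assumes "pi/2 \<le> a" "0 < d" "a + d \<le> b - d"
  shows "csc_energy (a + d) + csc_energy (b - d) < csc_energy a + csc_energy b"
proof -
  define E' where "E' x = (2/pi) * tsq_cot_csc (pi / (2*x))" for x
  have deriv: "(csc_energy has_real_derivative E' x) (at x)" if "a \<le> x" for x
    unfolding E'_def using that assms pi_ge_two by (intro csc_energy_deriv) auto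
  obtain z1 where z1: "a < z1" "z1 < a + d" "csc_energy (a + d) - csc_energy a = d * E' z1"
    using MVT2 [of a "a + d" csc_energy E'] deriv assms by force
  obtain z2 where z2: "b - d < z2" "z2 < b" "csc_energy b - csc_energy (b - d) = d * E' z2"
    using MVT2 [of "b - d" b csc_energy E'] deriv assms by force
  have "E' z1 < E' z2"
    unfolding E'_def using z1 z2 assms by (intro csc_energy_deriv_strict_mono) auto
  then show ?thesis
    using z1 z2 assms by (simp add: algebra_simps)
qed

lemma D_energy_spread_step:
  assumes "odd n" "odd r" "3 \<le> r" "2 * r + 7 \<le> n"
  shows "D_energy n (r + 2) (n - (r + 2) - 1) < D_energy n r (n - r - 1)"
proof -
  have odd: "odd (r + 2)" "odd (n - r - 1)" "odd (n - (r + 2) - 1)"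
    using assms by presburger+
  have "real (r + 2) = real r + 2" "real (n - (r + 2) - 1) = real (n - r - 1) - 2"
    using assms by (simp_all add: of_nat_diff)
  then have "D_energy n (r + 2) (n - (r + 2) - 1)
      = csc_energy (real r + 2) + csc_energy (real (n - r - 1) - 2)"
    unfolding D_energy_def cycle_energy_odd [OF odd(1)] cycle_energy_odd [OF odd(3)]
    by (simp add: add.commute)
  also have "\<dots> < csc_energy (real r) + csc_energy (real (n - r - 1))"
    using assms pi_less_4 by (intro csc_energy_spread) (auto simp: of_nat_diff)
  also have "\<dots> = D_energy n r (n - r - 1)"
    unfolding D_energy_def cycle_energy_odd [OF assms(2)] cycle_energy_odd [OF odd(2)] ..
  finally show ?thesis .
qed

lemma D_energy_le_first:
  assumes "odd n" "odd r" "3 \<le> r" "2 * r + 3 \<le> n"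
  shows "D_energy n r (n - r - 1) \<le> D_energy n 3 (n - 4)"
proof -
  have "\<exists>j. r = 3 + 2 * j"
    using assms by presburger
  then obtain j where j: "r = 3 + 2 * j" ..
  define f where "f i = D_energy n (3 + 2 * i) (n - (3 + 2 * i) - 1)" for i
  have "f j \<le> f 0"
  proof (rule lift_Suc_antimono_le_ivl [of "{i. 2 * (3 + 2 * i) + 7 \<le> n}"])
    show "{0..<j} \<subseteq> {i. 2 * (3 + 2 * i) + 7 \<le> n}"
      using assms(4) j by auto
    show "f (Suc i) \<le> f i" if "i \<in> {i. 2 * (3 + 2 * i) + 7 \<le> n}" for i
      using D_energy_spread_step [of n "3 + 2 * i"] that assms(1) unfolding f_def by auto
  qed simp
  then show ?thesis
    unfolding f_def j by (simp add: numeral_eq_Suc)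
qed

theorem lemma3p16:
  fixes n :: nat
  assumes "n > 5" and "n mod 4 = 1"
  shows "(\<forall>r. odd r \<and> 3 \<le> r \<and> r \<le> n - 4 \<longrightarrow>
            D_energy n r (n - r - 1) \<le> D_energy n 3 (n - 4))
       \<and> (\<forall>r. odd r \<and> 3 \<le> r \<and> r + 2 \<le> (n - 3) div 2 \<longrightarrow>
            D_energy n (r + 2) (n - (r + 2) - 1) < D_energy n r (n - r - 1))"
proof -
  have n: "odd n"
    using assms(2) by presburger
  have max: "D_energy n r (n - r - 1) \<le> D_energy n 3 (n - 4)"
    if r: "odd r" "3 \<le> r" "r \<le> n - 4" for r
  proof (cases "2 * r + 3 \<le> n")
    case True
    then show ?thesis
      by (rule D_energy_le_first [OF n r(1,2)])
  next
    case False
    \<comment> \<open>here \<open>n mod 4 = 1\<close> matters, not just \<open>odd n\<close>: \<open>(n - 1) / 2\<close> is even, hence not a value of \<open>r\<close>\<close>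
    then have "n + 1 \<le> 2 * r"
      using r(1) assms(2) by presburger
    moreover have "odd (n - r - 1)"
      using n r by presburger
    ultimately have "D_energy n (n - r - 1) (n - (n - r - 1) - 1) \<le> D_energy n 3 (n - 4)"
      using n r by (intro D_energy_le_first) auto
    moreover have "n - (n - r - 1) - 1 = r"
      using r by simp
    ultimately show ?thesis
      by (simp add: D_energy_def add.commute)
  qed
  have chain: "D_energy n (r + 2) (n - (r + 2) - 1) < D_energy n r (n - r - 1)"
    if "odd r" "3 \<le> r" "r + 2 \<le> (n - 3) div 2" for r
    using that(3) by (intro D_energy_spread_step [OF n that(1,2)]) linarith
  show ?thesis
    using max chain by blast
qed

end
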